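(* Let $I$ be a nonzero proper monomial ideal of $R=K[x_1,\ldots,x_d]$ ($K$ a field), and write $NP(I)=\{\mathbf{x}\in\mathbb{R}^d_+\mid \mathbf{a}_i\cdot\mathbf{x}\ge c_i,\ 1\le i\le s\}$ with $\mathbf{a}_i=(a_{i1},\ldots,a_{id})\in\mathbb{N}^d$, $c_i\in\mathbb{N}$, each inequality defining a facet of $NP(I)$. Then: (1) All jumping numbers for $I$ are rational. (2) For each $r\in\mathbb{R}_+$ there exists $r'\in\mathbb{Q}$ with $\overline{I^r}=\overline{I^{r'}}$; moreover $r'$ can be taken to be a jumping number for $I$. (3) If $r$ is a jumping number for $I$, then $nr$ is a jumping number for $I$ for all $n\in\mathbb{N}$. (4) If $\mathbf{v}=(v_1,\ldots,v_d)$ is a vertex of $NP(I)$, then for all $n\in\mathbb{N}$ the number $r_n=\frac{n}{\gcd(v_1,\ldots,v_d)}$ is a jumping number for $I$. (5) For each $i$ with $c_i\neq0$ let $S_i=\{rc_i \mid r\in\mathbb{R}_+ \text{ and there exists } \mathbf{x}\in\mathbb{N}^d \text{ with } \mathbf{a}_i\cdot\mathbf{x}=rc_i \text{ and } \mathbf{a}_l\cdot\mathbf{x}\ge rc_l \text{ for all } l\neq i\}$. Then each $S_i$ is a submonoid of the additive monoid generated by $a_{i1},\ldots,a_{id}$, and the set $\mathcal{J}$ of jumping numbers for $I$ equals $\bigcup_{c_i\neq0}\frac{1}{c_i}S_i$.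
   Context: $\mathbb{R}_+$ denotes the non-negative reals, $\mathbb{N}$ the non-negative integers, and $\mathbf{x}^{\mathbf{a}}=x_1^{a_1}\cdots x_d^{a_d}$. $NP(I)$ is the convex hull in $\mathbb{R}^d$ of $\{\mathbf{a}\in\mathbb{N}^d\mid \mathbf{x}^{\mathbf{a}}\in I\}$. For real $t\ge0$, the $t$-th real power of $I$ is $\overline{I^t}=(\{\mathbf{x}^{\mathbf{a}}\mid \mathbf{a}\in t\cdot NP(I)\cap\mathbb{N}^d\})$, where $t\cdot NP(I)=\{\mathbf{x}\in\mathbb{R}^d_+\mid \mathbf{a}_i\cdot\mathbf{x}\ge tc_i,\ 1\le i\le s\}$. For $r\ge0$, $\overline{I^{>r}}=\bigcup_{t>r}\overline{I^t}$. A jumping number for $I$ is a real $r\ge0$ with $\overline{I^r}\neq\overline{I^{>r}}$. *)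

theory Defs
  imports "HOL-Analysis.Analysis"
begin

text \<open>Monomials x^a of K[x_1..x_d] are identified with their exponent vectors,
  which we regard as points of real^'n with natural-number coordinates
  (the index type 'n stands for {1..d}). A monomial ideal is identified with
  the set of exponent vectors of the monomials it contains.\<close>

definition lat :: "(real^'n) set" where
  "lat = {x. \<forall>j. x $ j \<in> \<nat>}"

definition mono_ideal :: "(real^'n) set \<Rightarrow> (real^'n) set" where
  "mono_ideal G = {b \<in> lat. \<exists>a\<in>G. \<forall>j. a $ j \<le> b $ j}"

definition monomial_ideal :: "(real^'n) set \<Rightarrow> bool" where
  "monomial_ideal E \<longleftrightarrow> E \<subseteq> lat \<and>
     (\<forall>a\<in>E. \<forall>b\<in>lat. (\<forall>j. a $ j \<le> b $ j) \<longrightarrow> b \<in> E)"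

definition NP :: "(real^'n) set \<Rightarrow> (real^'n) set" where
  "NP E = convex hull E"

text \<open>t * NP(I) defined via the (facet) inequalities a i . x >= t c i, i < s.\<close>
definition tNP :: "(nat \<Rightarrow> real^'n) \<Rightarrow> (nat \<Rightarrow> real) \<Rightarrow> nat \<Rightarrow> real \<Rightarrow> (real^'n) set" where
  "tNP a c s t = {x. (\<forall>j. 0 \<le> x $ j) \<and> (\<forall>i<s. a i \<bullet> x \<ge> t * c i)}"

definition real_pow :: "(nat \<Rightarrow> real^'n) \<Rightarrow> (nat \<Rightarrow> real) \<Rightarrow> nat \<Rightarrow> real \<Rightarrow> (real^'n) set" where
  "real_pow a c s t = mono_ideal (tNP a c s t \<inter> lat)"

definition real_pow_gt :: "(nat \<Rightarrow> real^'n) \<Rightarrow> (nat \<Rightarrow> real) \<Rightarrow> nat \<Rightarrow> real \<Rightarrow> (real^'n) set" where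
  "real_pow_gt a c s r = (\<Union>t\<in>{r<..}. real_pow a c s t)"

definition jumping_number :: "(nat \<Rightarrow> real^'n) \<Rightarrow> (nat \<Rightarrow> real) \<Rightarrow> nat \<Rightarrow> real \<Rightarrow> bool" where
  "jumping_number a c s r \<longleftrightarrow> r \<ge> 0 \<and> real_pow a c s r \<noteq> real_pow_gt a c s r"

definition vgcd :: "real^'n \<Rightarrow> nat" where
  "vgcd v = Gcd ((\<lambda>j. nat \<lfloor>v $ j\<rfloor>) ` UNIV)"

definition S_set :: "(nat \<Rightarrow> real^'n) \<Rightarrow> (nat \<Rightarrow> real) \<Rightarrow> nat \<Rightarrow> nat \<Rightarrow> real set" where
  "S_set a c s i = {r * c i | r. r \<ge> 0 \<and> (\<exists>x\<in>lat. a i \<bullet> x = r * c i \<and>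
        (\<forall>l<s. l \<noteq> i \<longrightarrow> a l \<bullet> x \<ge> r * c l))}"

definition gen_monoid :: "real^'n \<Rightarrow> real set" where
  "gen_monoid w = {\<Sum>j\<in>UNIV. real (k j) * w $ j | k. True}"

definition submonoid_of :: "real set \<Rightarrow> real set \<Rightarrow> bool" where
  "submonoid_of S M \<longleftrightarrow> S \<subseteq> M \<and> 0 \<in> S \<and> (\<forall>x\<in>S. \<forall>y\<in>S. x + y \<in> S)"

end

theory Submission
  imports Defs
begin

text \<open>For a lattice point x (a monomial) let threshold x be the largest t with
  x \<in> t NP(I), i.e. the minimum of a i \<bullet> x / c i over the inequalities with c i > 0
  (the others hold on the whole nonnegative orthant).
  The t-th real power consists of the lattice points of threshold at least t, so the jumping
  numbers are exactly the thresholds of lattice points. These are quotients of natural numbers,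
  scale linearly with x, lie in (1 / \<Prod>c i) \<nat> and hence are well-ordered, and equal 1 at a
  vertex v of NP(I), which can be scaled by n / gcd(v) within the lattice.\<close>

lemma sum_in_Nats:
  "(\<And>x. x \<in> A \<Longrightarrow> f x \<in> \<nat>) \<Longrightarrow> sum f A \<in> (\<nat>::'a::semiring_1 set)"
  by (induction A rule: infinite_finite_induct) auto

lemma prod_in_Nats:
  "(\<And>x. x \<in> A \<Longrightarrow> f x \<in> \<nat>) \<Longrightarrow> prod f A \<in> (\<nat>::'a::comm_semiring_1 set)"
  by (induction A rule: infinite_finite_induct) auto

lemma Nats_nonneg: "x \<in> \<nat> \<Longrightarrow> (0::'a::linordered_semidom) \<le> x"
  by (auto elim: Nats_cases)

lemma lat_nonneg: "x \<in> lat \<Longrightarrow> 0 \<le> x $ j"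
  unfolding lat_def using Nats_nonneg by blast

lemma zero_in_lat: "0 \<in> lat"
  unfolding lat_def by auto

lemma lat_add: "x \<in> lat \<Longrightarrow> y \<in> lat \<Longrightarrow> x + y \<in> lat"
  unfolding lat_def by auto

lemma lat_scaleR_nat: "x \<in> lat \<Longrightarrow> real n *\<^sub>R x \<in> lat"
  unfolding lat_def by auto

lemma inner_lat_Nats: "x \<in> lat \<Longrightarrow> y \<in> lat \<Longrightarrow> x \<bullet> y \<in> \<nat>"
  unfolding inner_vec_def lat_def by (intro sum_in_Nats) auto

lemma inner_lat_mono: "a \<in> lat \<Longrightarrow> (\<And>j. x $ j \<le> y $ j) \<Longrightarrow> a \<bullet> x \<le> a \<bullet> y"
  unfolding inner_vec_def by (intro sum_mono) (simp add: lat_nonneg mult_left_mono)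

lemma inner_lat_nonneg: "a \<in> lat \<Longrightarrow> (\<And>j. 0 \<le> x $ j) \<Longrightarrow> 0 \<le> a \<bullet> x"
  using inner_lat_mono[of a 0 x] by simp

lemma lat_eq_of_nat_floor:
  assumes "x \<in> lat"
  shows "x $ j = real (nat \<lfloor>x $ j\<rfloor>)"
proof -
  have "x $ j \<in> \<nat>" using assms unfolding lat_def by blast
  then show ?thesis by (auto elim!: Nats_cases)
qed

text \<open>The coordinate sum is at least 1 on nonzero lattice points, and 0 at the origin.\<close>
lemma zero_notin_convex_hull_lat:
  assumes "S \<subseteq> lat" "0 \<notin> S"
  shows "0 \<notin> convex hull S"
proof -
  let ?one = "(\<chi> j. 1) :: real^'n"
  have "S \<subseteq> {x. 1 \<le> ?one \<bullet> x}"
  proof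
    fix x assume x: "x \<in> S"
    then obtain j where j: "x $ j \<noteq> 0"
      using assms(2) by (metis vec_eq_iff zero_index)
    have xl: "x \<in> lat" using x assms(1) by auto
    then have "x $ j \<in> \<nat>" unfolding lat_def by auto
    then have "1 \<le> x $ j" using j by (auto elim!: Nats_cases)
    also have "\<dots> \<le> (\<Sum>k\<in>UNIV. x $ k)"
      by (rule member_le_sum) (auto simp: lat_nonneg[OF xl])
    finally show "x \<in> {x. 1 \<le> ?one \<bullet> x}" by (simp add: inner_vec_def)
  qed
  then have "convex hull S \<subseteq> {x. 1 \<le> ?one \<bullet> x}"
    by (intro hull_minimal convex_halfspace_ge)
  then show ?thesis by auto
qed

lemma vgcd_dvd: "vgcd v dvd nat \<lfloor>v $ j\<rfloor>"
  unfolding vgcd_def by (rule Gcd_dvd) simp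

lemma vgcd_nonzero:
  assumes "v \<in> lat" "v \<noteq> 0"
  shows "vgcd v \<noteq> 0"
proof
  assume "vgcd v = 0"
  then have "\<And>j. v $ j = 0"
    using vgcd_dvd[of v] lat_eq_of_nat_floor[OF assms(1)] by (metis dvd_0_left_iff of_nat_0)
  then show False using assms(2) by (simp add: vec_eq_iff)
qed

lemma lat_scaleR_inverse_vgcd:
  assumes "v \<in> lat" "v \<noteq> 0"
  shows "(1 / real (vgcd v)) *\<^sub>R v \<in> lat"
  unfolding lat_def
proof (intro CollectI allI)
  fix j
  obtain q where q: "nat \<lfloor>v $ j\<rfloor> = vgcd v * q" using vgcd_dvd[of v j] by (auto elim: dvdE)
  have "((1 / real (vgcd v)) *\<^sub>R v) $ j = real (nat \<lfloor>v $ j\<rfloor>) / real (vgcd v)"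
    using lat_eq_of_nat_floor[OF assms(1)] by simp
  also have "\<dots> = real q" using q vgcd_nonzero[OF assms] by simp
  finally show "((1 / real (vgcd v)) *\<^sub>R v) $ j \<in> \<nat>" by simp
qed

lemma exists_least_Nats_multiple:
  fixes A :: "real set"
  assumes "0 < C" "A \<noteq> {}" "\<And>y. y \<in> A \<Longrightarrow> C * y \<in> \<nat>"
  shows "\<exists>m\<in>A. \<forall>y\<in>A. m \<le> y"
proof -
  define N where "N = {n. \<exists>y\<in>A. C * y = real n}"
  have "N \<noteq> {}" using assms(2,3) unfolding N_def by (fastforce elim!: Nats_cases)
  then obtain m where m: "m \<in> A" "C * m = real (Least (\<lambda>n. n \<in> N))"
    using LeastI_ex[of "\<lambda>n. n \<in> N"] unfolding N_def by auto
  have "m \<le> y" if y: "y \<in> A" for y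
  proof -
    obtain n where n: "C * y = real n" using assms(3)[OF y] by (metis Nats_cases)
    then have "Least (\<lambda>n. n \<in> N) \<le> n" using y unfolding N_def by (intro Least_le) auto
    then have "C * m \<le> C * y" using m n by simp
    then show ?thesis using assms(1) by simp
  qed
  then show ?thesis using m by blast
qed

lemma submonoid_S_set: "submonoid_of (S_set a c s i) (gen_monoid (a i))"
proof -
  have "S_set a c s i \<subseteq> gen_monoid (a i)"
  proof
    fix y assume "y \<in> S_set a c s i"
    then obtain x where x: "x \<in> lat" "y = a i \<bullet> x" unfolding S_set_def by auto
    have "y = (\<Sum>j\<in>UNIV. real (nat \<lfloor>x $ j\<rfloor>) * a i $ j)"
      unfolding x(2) inner_vec_def
      by (rule sum.cong) (simp_all flip: lat_eq_of_nat_floor[OF x(1)])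
    then show "y \<in> gen_monoid (a i)"
      unfolding gen_monoid_def by (simp add: exI[of _ "\<lambda>j. nat \<lfloor>x $ j\<rfloor>"])
  qed
  moreover have "0 \<in> S_set a c s i"
    unfolding S_set_def
    by (intro CollectI exI[of _ 0] conjI bexI[of _ 0]) (simp_all add: zero_in_lat)
  moreover have "u + v \<in> S_set a c s i" if uv: "u \<in> S_set a c s i" "v \<in> S_set a c s i" for u v
  proof -
    obtain r x where u: "u = r * c i" "r \<ge> 0" "x \<in> lat" "a i \<bullet> x = r * c i"
        "\<forall>l<s. l \<noteq> i \<longrightarrow> r * c l \<le> a l \<bullet> x"
      using uv(1) unfolding S_set_def by blast
    obtain r' x' where v: "v = r' * c i" "r' \<ge> 0" "x' \<in> lat" "a i \<bullet> x' = r' * c i"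
        "\<forall>l<s. l \<noteq> i \<longrightarrow> r' * c l \<le> a l \<bullet> x'"
      using uv(2) unfolding S_set_def by blast
    have "\<forall>l<s. l \<noteq> i \<longrightarrow> (r + r') * c l \<le> a l \<bullet> (x + x')"
      using u(5) v(5) by (simp add: inner_add_right distrib_right add_mono)
    moreover have "a i \<bullet> (x + x') = (r + r') * c i" "u + v = (r + r') * c i"
      using u v by (simp_all add: inner_add_right distrib_right)
    moreover have "r + r' \<ge> 0" "x + x' \<in> lat" using u(2,3) v(2,3) lat_add by auto
    ultimately show ?thesis unfolding S_set_def by blast
  qed
  ultimately show ?thesis unfolding submonoid_of_def by blast
qed

locale nat_inequality_system =
  fixes a :: "nat \<Rightarrow> real^'n" and c :: "nat \<Rightarrow> real" and s :: nat
  assumes a_lat: "i < s \<Longrightarrow> a i \<in> lat"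
    and c_Nats: "i < s \<Longrightarrow> c i \<in> \<nat>"
    and some_c_nonzero: "\<exists>i<s. c i \<noteq> 0"
begin

definition pos_idx :: "nat set" where
  "pos_idx = {i. i < s \<and> c i \<noteq> 0}"

definition threshold :: "real^'n \<Rightarrow> real" where
  "threshold x = Min ((\<lambda>i. a i \<bullet> x / c i) ` pos_idx)"

lemma finite_pos_idx: "finite pos_idx"
  unfolding pos_idx_def by simp

lemma pos_idx_nonempty: "pos_idx \<noteq> {}"
  unfolding pos_idx_def using some_c_nonzero by blast

lemma c_nonneg: "i < s \<Longrightarrow> 0 \<le> c i"
  using c_Nats Nats_nonneg by blast

lemma c_pos: "i \<in> pos_idx \<Longrightarrow> 0 < c i"
  unfolding pos_idx_def using c_nonneg by force

lemma inequality_outside_pos_idx: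
  "(\<And>j. 0 \<le> x $ j) \<Longrightarrow> l < s \<Longrightarrow> l \<notin> pos_idx \<Longrightarrow> t * c l \<le> a l \<bullet> x"
  unfolding pos_idx_def by (simp add: inner_lat_nonneg[OF a_lat])

lemma threshold_ge_iff: "t \<le> threshold x \<longleftrightarrow> (\<forall>i\<in>pos_idx. t * c i \<le> a i \<bullet> x)"
  unfolding threshold_def using finite_pos_idx pos_idx_nonempty c_pos
  by (simp add: Min_ge_iff pos_le_divide_eq)

lemma threshold_attained: "\<exists>i\<in>pos_idx. a i \<bullet> x = threshold x * c i"
proof -
  have "threshold x \<in> (\<lambda>i. a i \<bullet> x / c i) ` pos_idx"
    unfolding threshold_def using finite_pos_idx pos_idx_nonempty by (intro Min_in) auto
  then obtain i where "i \<in> pos_idx" "threshold x = a i \<bullet> x / c i" by blast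
  then show ?thesis using c_pos[of i] by (intro bexI[of _ i]) simp_all
qed

lemma threshold_eqI:
  assumes "\<forall>l\<in>pos_idx. t * c l \<le> a l \<bullet> x" "i \<in> pos_idx" "a i \<bullet> x = t * c i"
  shows "threshold x = t"
proof (rule antisym)
  have "threshold x * c i \<le> t * c i"
    using threshold_ge_iff[of "threshold x" x] assms(2,3) by auto
  then show "threshold x \<le> t" using c_pos[OF assms(2)] by simp
  show "t \<le> threshold x" using assms(1) threshold_ge_iff by blast
qed

lemma threshold_scaleR: "0 \<le> k \<Longrightarrow> threshold (k *\<^sub>R x) = k * threshold x"
proof -
  assume k: "0 \<le> k"
  obtain i where "i \<in> pos_idx" "a i \<bullet> x = threshold x * c i"
    using threshold_attained by blast
  moreover have "\<forall>l\<in>pos_idx. threshold x * c l \<le> a l \<bullet> x"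
    using threshold_ge_iff by blast
  ultimately show ?thesis
    using k by (intro threshold_eqI[of _ _ i]) (auto simp: mult.assoc mult_left_mono)
qed

lemma threshold_zero: "threshold 0 = 0"
  using threshold_scaleR[of 0 0] by simp

lemma threshold_mono:
  assumes "\<And>j. x $ j \<le> y $ j"
  shows "threshold x \<le> threshold y"
proof -
  have "threshold x * c i \<le> a i \<bullet> y" if "i \<in> pos_idx" for i
  proof -
    have "threshold x * c i \<le> a i \<bullet> x" using that threshold_ge_iff by blast
    also have "\<dots> \<le> a i \<bullet> y"
      using that a_lat assms by (intro inner_lat_mono) (auto simp: pos_idx_def)
    finally show ?thesis .
  qed
  then show ?thesis using threshold_ge_iff by blast
qed

lemma threshold_nonneg: "(\<And>j. 0 \<le> x $ j) \<Longrightarrow> 0 \<le> threshold x"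
  using threshold_mono[of 0 x] threshold_zero by simp

lemma mem_tNP_iff: "x \<in> tNP a c s t \<longleftrightarrow> (\<forall>j. 0 \<le> x $ j) \<and> t \<le> threshold x"
  unfolding tNP_def threshold_ge_iff using inequality_outside_pos_idx
  by (auto simp: pos_idx_def)

lemma real_pow_eq: "real_pow a c s t = {x \<in> lat. t \<le> threshold x}"
proof (intro set_eqI iffI)
  fix x assume "x \<in> real_pow a c s t"
  then obtain y where "x \<in> lat" "t \<le> threshold y" "\<forall>j. y $ j \<le> x $ j"
    unfolding real_pow_def mono_ideal_def by (auto simp: mem_tNP_iff)
  then show "x \<in> {x \<in> lat. t \<le> threshold x}" using threshold_mono[of y x] by auto
next
  fix x assume x: "x \<in> {x \<in> lat. t \<le> threshold x}"
  then have "x \<in> tNP a c s t \<inter> lat" using lat_nonneg mem_tNP_iff by auto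
  then show "x \<in> real_pow a c s t" unfolding real_pow_def mono_ideal_def using x by blast
qed

lemma real_pow_gt_eq: "real_pow_gt a c s r = {x \<in> lat. r < threshold x}"
  unfolding real_pow_gt_def real_pow_eq by (auto intro: less_le_trans)

lemma jumping_number_iff: "jumping_number a c s r \<longleftrightarrow> r \<in> threshold ` lat"
proof
  assume "jumping_number a c s r"
  then have jump: "{x \<in> lat. r \<le> threshold x} \<noteq> {x \<in> lat. r < threshold x}"
    unfolding jumping_number_def real_pow_eq real_pow_gt_eq by blast
  show "r \<in> threshold ` lat"
  proof (rule ccontr)
    assume "r \<notin> threshold ` lat"
    then have "{x \<in> lat. r \<le> threshold x} = {x \<in> lat. r < threshold x}"
      by (auto simp: le_less)
    then show False using jump by blast
  qed
next
  assume "r \<in> threshold ` lat"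
  then obtain x where "x \<in> lat" "r = threshold x" by blast
  then show "jumping_number a c s r"
    unfolding jumping_number_def real_pow_eq real_pow_gt_eq
    using threshold_nonneg lat_nonneg by blast
qed

lemma threshold_rational: "x \<in> lat \<Longrightarrow> threshold x \<in> \<rat>"
proof -
  assume x: "x \<in> lat"
  obtain i where i: "i \<in> pos_idx" "a i \<bullet> x = threshold x * c i"
    using threshold_attained by blast
  then have "threshold x = (a i \<bullet> x) / c i" using c_pos[OF i(1)] by simp
  moreover have "a i \<bullet> x \<in> \<nat>" "c i \<in> \<nat>"
    using i(1) x a_lat c_Nats inner_lat_Nats by (auto simp: pos_idx_def)
  ultimately show ?thesis using Nats_subset_Rats by (auto intro: Rats_divide)
qed

lemma jumping_number_rational: "jumping_number a c s r \<Longrightarrow> r \<in> \<rat>"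
  unfolding jumping_number_iff using threshold_rational by blast

lemma jumping_number_mult_nat:
  assumes "jumping_number a c s r"
  shows "jumping_number a c s (real n * r)"
proof -
  obtain x where "x \<in> lat" "r = threshold x"
    using assms unfolding jumping_number_iff by blast
  then have "real n * r = threshold (real n *\<^sub>R x)" "real n *\<^sub>R x \<in> lat"
    using threshold_scaleR lat_scaleR_nat by simp_all
  then show ?thesis unfolding jumping_number_iff by blast
qed

lemma prod_c_mult_threshold_Nats: "x \<in> lat \<Longrightarrow> (\<Prod>i\<in>pos_idx. c i) * threshold x \<in> \<nat>"
proof -
  assume x: "x \<in> lat"
  obtain i where i: "i \<in> pos_idx" "a i \<bullet> x = threshold x * c i"
    using threshold_attained by blast
  have "(\<Prod>l\<in>pos_idx. c l) * threshold x = (a i \<bullet> x) * (\<Prod>l\<in>pos_idx - {i}. c l)"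
    using prod.remove[OF finite_pos_idx i(1), of c] i(2) by (simp add: ac_simps)
  moreover have "a i \<bullet> x \<in> \<nat>" "(\<Prod>l\<in>pos_idx - {i}. c l) \<in> \<nat>"
    using i(1) x a_lat c_Nats inner_lat_Nats by (auto simp: pos_idx_def intro!: prod_in_Nats)
  ultimately show ?thesis by simp
qed

lemma exists_jumping_number_same_real_pow:
  assumes x0: "x0 \<in> lat" "0 < threshold x0" and r: "0 \<le> r"
  shows "\<exists>r'. r' \<in> \<rat> \<and> real_pow a c s r = real_pow a c s r' \<and> jumping_number a c s r'"
proof -
  let ?A = "{t \<in> threshold ` lat. r \<le> t}"
  define k where "k = nat \<lceil>r / threshold x0\<rceil>"
  have "r = (r / threshold x0) * threshold x0" using x0(2) by simp
  also have "\<dots> \<le> real k * threshold x0"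
    unfolding k_def using x0(2) by (intro mult_right_mono) (auto intro: real_nat_ceiling_ge)
  also have "\<dots> = threshold (real k *\<^sub>R x0)" using threshold_scaleR by simp
  finally have "?A \<noteq> {}" using lat_scaleR_nat[OF x0(1)] by blast
  moreover have "0 < (\<Prod>i\<in>pos_idx. c i)" using c_pos by (intro prod_pos) auto
  ultimately obtain r' where r': "r' \<in> ?A" "\<forall>t\<in>?A. r' \<le> t"
    using exists_least_Nats_multiple[of _ ?A] prod_c_mult_threshold_Nats by blast
  have "real_pow a c s r = real_pow a c s r'"
    unfolding real_pow_eq using r' by fastforce
  moreover have "jumping_number a c s r'"
    using r'(1) unfolding jumping_number_iff by blast
  ultimately show ?thesis using jumping_number_rational by blast
qed

lemma threshold_extreme_point:
  assumes t: "0 < t" and v: "v extreme_point_of tNP a c s t"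
  shows "threshold v = t"
proof (rule ccontr)
  let ?\<mu> = "threshold v"
  have v_nonneg: "\<forall>j. 0 \<le> v $ j" and "t \<le> ?\<mu>"
    using v unfolding extreme_point_of_def mem_tNP_iff by auto
  moreover assume "?\<mu> \<noteq> t"
  ultimately have \<mu>: "t < ?\<mu>" by simp
  have scaled_mem: "k *\<^sub>R v \<in> tNP a c s t" if "0 \<le> k" "t \<le> k * ?\<mu>" for k
    unfolding mem_tNP_iff using that v_nonneg threshold_scaleR by simp
  define p q where "p = (t / ?\<mu>) *\<^sub>R v" and "q = (2 - t / ?\<mu>) *\<^sub>R v"
  have ratio: "0 < t / ?\<mu>" "t / ?\<mu> < 1" using t \<mu> by simp_all
  have "p \<in> tNP a c s t" unfolding p_def using ratio \<mu> by (intro scaled_mem) simp_all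
  moreover have "q \<in> tNP a c s t"
    unfolding q_def using ratio \<mu> by (intro scaled_mem) (simp_all add: algebra_simps)
  moreover have "v \<noteq> 0" using t \<mu> threshold_zero by auto
  then have "p \<noteq> q" using ratio unfolding p_def q_def by (auto simp: scaleR_cancel_right)
  then have "v \<in> open_segment p q"
    using midpoint_in_open_segment[of p q]
    unfolding p_def q_def midpoint_def by (simp flip: scaleR_add_left)
  ultimately show False using v unfolding extreme_point_of_def by blast
qed

lemma jumping_number_extreme_point:
  assumes "v extreme_point_of tNP a c s 1" "v \<in> lat"
  shows "jumping_number a c s (real n / real (vgcd v))"
proof -
  have thr: "threshold v = 1" using threshold_extreme_point assms(1) by simp
  then have "v \<noteq> 0" using threshold_zero by auto
  then have "real n *\<^sub>R (1 / real (vgcd v)) *\<^sub>R v \<in> lat"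
    using lat_scaleR_nat lat_scaleR_inverse_vgcd assms(2) by blast
  moreover have "threshold (real n *\<^sub>R (1 / real (vgcd v)) *\<^sub>R v) = real n / real (vgcd v)"
    using threshold_scaleR thr by simp
  ultimately show ?thesis unfolding jumping_number_iff by (metis image_eqI)
qed

lemma jumping_numbers_eq_Union_S_set:
  "{r. jumping_number a c s r} = (\<Union>i\<in>pos_idx. (\<lambda>y. y / c i) ` S_set a c s i)"
proof (intro set_eqI iffI)
  fix r assume "r \<in> {r. jumping_number a c s r}"
  then obtain x where x: "x \<in> lat" "r = threshold x" unfolding jumping_number_iff by auto
  obtain i where i: "i \<in> pos_idx" "a i \<bullet> x = r * c i"
    using threshold_attained x(2) by blast
  have "\<forall>l<s. r * c l \<le> a l \<bullet> x"
    using x threshold_ge_iff inequality_outside_pos_idx lat_nonneg by blast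
  moreover have "0 \<le> r" using x threshold_nonneg lat_nonneg by blast
  ultimately have "r * c i \<in> S_set a c s i" unfolding S_set_def using x(1) i(2) by blast
  moreover have "r = r * c i / c i" using c_pos[OF i(1)] by simp
  ultimately show "r \<in> (\<Union>i\<in>pos_idx. (\<lambda>y. y / c i) ` S_set a c s i)" using i(1) by blast
next
  fix r assume "r \<in> (\<Union>i\<in>pos_idx. (\<lambda>y. y / c i) ` S_set a c s i)"
  then obtain i y where i: "i \<in> pos_idx" and "y \<in> S_set a c s i" "r = y / c i" by blast
  then obtain x where x: "x \<in> lat" "a i \<bullet> x = r * c i" "\<forall>l<s. l \<noteq> i \<longrightarrow> r * c l \<le> a l \<bullet> x"
    unfolding S_set_def using c_pos[OF i] by auto
  then have "\<forall>l\<in>pos_idx. r * c l \<le> a l \<bullet> x" by (auto simp: pos_idx_def)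
  then have "threshold x = r" using threshold_eqI i x(2) by blast
  then show "r \<in> {r. jumping_number a c s r}" unfolding jumping_number_iff using x(1) by blast
qed

end

theorem theorem5p9:
  fixes E :: "(real^'n) set" and a :: "nat \<Rightarrow> real^'n" and c :: "nat \<Rightarrow> real" and s :: nat
  assumes mono: "monomial_ideal E"
    and nonzero: "E \<noteq> {}"
    and proper: "0 \<notin> E"
    and a_nat: "\<forall>i<s. a i \<in> lat"
    and c_nat: "\<forall>i<s. c i \<in> \<nat>"
    and NP_eq: "NP E = {x. (\<forall>j. 0 \<le> x $ j) \<and> (\<forall>i<s. a i \<bullet> x \<ge> c i)}"
    and facets: "\<forall>i<s. (NP E \<inter> {x. a i \<bullet> x = c i}) facet_of NP E"
  shows "(\<forall>r. jumping_number a c s r \<longrightarrow> r \<in> \<rat>)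
    \<and> (\<forall>r\<ge>0. \<exists>r'. r' \<in> \<rat> \<and> real_pow a c s r = real_pow a c s r' \<and> jumping_number a c s r')
    \<and> (\<forall>r. jumping_number a c s r \<longrightarrow> (\<forall>n::nat. jumping_number a c s (real n * r)))
    \<and> (\<forall>v. v extreme_point_of NP E \<longrightarrow>
          (\<forall>n::nat. jumping_number a c s (real n / real (vgcd v))))
    \<and> (\<forall>i<s. c i \<noteq> 0 \<longrightarrow> submonoid_of (S_set a c s i) (gen_monoid (a i)))
    \<and> {r. jumping_number a c s r} =
        (\<Union>i\<in>{i. i < s \<and> c i \<noteq> 0}. (\<lambda>y. y / c i) ` S_set a c s i)"
proof -
  have E_lat: "E \<subseteq> lat" using mono unfolding monomial_ideal_def by blast
  have "\<exists>i<s. c i \<noteq> 0"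
  proof (rule ccontr)
    assume "\<not> (\<exists>i<s. c i \<noteq> 0)"
    then have "0 \<in> NP E" unfolding NP_eq by simp
    then show False using zero_notin_convex_hull_lat[OF E_lat proper] unfolding NP_def by blast
  qed
  then interpret nat_inequality_system a c s using a_nat c_nat by unfold_locales auto
  have NP_tNP: "NP E = tNP a c s 1" unfolding NP_eq tNP_def by simp
  obtain x0 where "x0 \<in> E" using nonzero by blast
  then have x0: "x0 \<in> lat" "0 < threshold x0"
    using E_lat hull_subset[of E convex] NP_tNP mem_tNP_iff[of x0 1] unfolding NP_def by auto
  have vertex_lat: "v \<in> lat" if "v extreme_point_of NP E" for v
    using extreme_point_of_convex_hull[of v E] that E_lat unfolding NP_def by blast
  show ?thesis
  proof (intro conjI allI impI)
    show "r \<in> \<rat>" if "jumping_number a c s r" for r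
      using jumping_number_rational that .
    show "\<exists>r'. r' \<in> \<rat> \<and> real_pow a c s r = real_pow a c s r' \<and> jumping_number a c s r'"
      if "0 \<le> r" for r
      using exists_jumping_number_same_real_pow[OF x0 that] .
    show "jumping_number a c s (real n * r)" if "jumping_number a c s r" for r n
      using jumping_number_mult_nat that .
    show "jumping_number a c s (real n / real (vgcd v))" if "v extreme_point_of NP E" for v n
      using jumping_number_extreme_point vertex_lat that unfolding NP_tNP by blast
    show "submonoid_of (S_set a c s i) (gen_monoid (a i))" for i
      by (rule submonoid_S_set)
    show "{r. jumping_number a c s r} =
        (\<Union>i\<in>{i. i < s \<and> c i \<noteq> 0}. (\<lambda>y. y / c i) ` S_set a c s i)"
      using jumping_numbers_eq_Union_S_set unfolding pos_idx_def .
  qed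
qed

end
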